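(* Let $W=I_2(k)$ be the dihedral group of order $2k$, $k\ge2$. Then $$\operatorname{Cat}^{(1)}(W;q,t)=[k+1]_{q,t}+qt=q^k+q^{k-1}t+\dots+qt^{k-1}+t^k+qt.$$
   Context: $W=I_2(k)$ acts as a real reflection group on $\mathbb{C}^2$, identically on the variables $(x_1,x_2)$ and $(y_1,y_2)$ of $\mathbb{C}[\mathbf{x},\mathbf{y}]=\mathbb{C}[x_1,x_2,y_1,y_2]$. A polynomial $p$ is determinantal if $\omega(p)=\det(\omega)p$ for all $\omega\in W$; $\mathcal{A}$ is the ideal generated by all determinantal polynomials. The $q,t$-Fu\ss-Catalan number $\operatorname{Cat}^{(m)}(W;q,t)$ is the bigraded Hilbert series $\sum_{i,j}\dim(M_{i,j})q^it^j$ of $M=\mathcal{A}^m/\langle\mathbf{x},\mathbf{y}\rangle\mathcal{A}^m$, bigraded by ($\mathbf{x}$-degree, $\mathbf{y}$-degree), where $\langle\mathbf{x},\mathbf{y}\rangle$ is the ideal of polynomials without constant term. $[n]_{q,t}=(q^n-t^n)/(q-t)=q^{n-1}+q^{n-2}t+\dots+t^{n-1}$. *)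

theory Defs
  imports Complex_Main "HOL-Library.Poly_Mapping"
begin

datatype var = X1 | X2 | Y1 | Y2

type_synonym poly4 = "(var \<Rightarrow>\<^sub>0 nat) \<Rightarrow>\<^sub>0 complex"

definition pconst :: "complex \<Rightarrow> poly4" where
  "pconst c = Poly_Mapping.single 0 c"

definition pvar :: "var \<Rightarrow> poly4" where
  "pvar v = Poly_Mapping.single (Poly_Mapping.single v 1) 1"

definition subst :: "(var \<Rightarrow> poly4) \<Rightarrow> poly4 \<Rightarrow> poly4" where
  "subst \<sigma> p = (\<Sum>mo\<in>Poly_Mapping.keys p. pconst (Poly_Mapping.lookup p mo) *
                   (\<Prod>v\<in>Poly_Mapping.keys mo. \<sigma> v ^ Poly_Mapping.lookup mo v))"

text \<open>2x2 complex matrices, indices 0 and 1.\<close>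
type_synonym mat2 = "nat \<Rightarrow> nat \<Rightarrow> complex"

definition det2 :: "mat2 \<Rightarrow> complex" where
  "det2 w = w 0 0 * w 1 1 - w 0 1 * w 1 0"

definition rot :: "nat \<Rightarrow> nat \<Rightarrow> mat2" where
  "rot k j = (let c = complex_of_real (cos (2 * pi * real j / real k));
                  s = complex_of_real (sin (2 * pi * real j / real k))
              in (\<lambda>a b. if a = 0 \<and> b = 0 then c else if a = 0 \<and> b = 1 then - s
                        else if a = 1 \<and> b = 0 then s else if a = 1 \<and> b = 1 then c else 0))"

definition refl :: "nat \<Rightarrow> nat \<Rightarrow> mat2" where
  "refl k j = (let c = complex_of_real (cos (2 * pi * real j / real k));
                   s = complex_of_real (sin (2 * pi * real j / real k))
              in (\<lambda>a b. if a = 0 \<and> b = 0 then c else if a = 0 \<and> b = 1 then s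
                        else if a = 1 \<and> b = 0 then s else if a = 1 \<and> b = 1 then - c else 0))"

definition dihedral :: "nat \<Rightarrow> mat2 set" where
  "dihedral k = {rot k j | j. j < k} \<union> {refl k j | j. j < k}"

definition act :: "mat2 \<Rightarrow> poly4 \<Rightarrow> poly4" where
  "act w p = subst (\<lambda>v. case v of
       X1 \<Rightarrow> pconst (w 0 0) * pvar X1 + pconst (w 0 1) * pvar X2
     | X2 \<Rightarrow> pconst (w 1 0) * pvar X1 + pconst (w 1 1) * pvar X2
     | Y1 \<Rightarrow> pconst (w 0 0) * pvar Y1 + pconst (w 0 1) * pvar Y2
     | Y2 \<Rightarrow> pconst (w 1 0) * pvar Y1 + pconst (w 1 1) * pvar Y2) p"

definition determinantal :: "mat2 set \<Rightarrow> poly4 \<Rightarrow> bool" where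
  "determinantal W p \<longleftrightarrow> (\<forall>w\<in>W. act w p = pconst (det2 w) * p)"

definition ideal_gen :: "poly4 set \<Rightarrow> poly4 set" where
  "ideal_gen S = module.span ((*) :: poly4 \<Rightarrow> poly4 \<Rightarrow> poly4) S"

fun ideal_pow :: "poly4 set \<Rightarrow> nat \<Rightarrow> poly4 set" where
  "ideal_pow I 0 = UNIV"
| "ideal_pow I (Suc n) = ideal_gen {a * b | a b. a \<in> ideal_pow I n \<and> b \<in> I}"

definition detideal :: "mat2 set \<Rightarrow> poly4 set" where
  "detideal W = ideal_gen {p. determinantal W p}"

text \<open><x,y> J: the product of the ideal of polynomials without constant term with J.\<close>
definition max_times :: "poly4 set \<Rightarrow> poly4 set" where
  "max_times J = ideal_gen {f * a | f a. Poly_Mapping.lookup f 0 = 0 \<and> a \<in> J}"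

definition xdeg :: "(var \<Rightarrow>\<^sub>0 nat) \<Rightarrow> nat" where
  "xdeg m = Poly_Mapping.lookup m X1 + Poly_Mapping.lookup m X2"

definition ydeg :: "(var \<Rightarrow>\<^sub>0 nat) \<Rightarrow> nat" where
  "ydeg m = Poly_Mapping.lookup m Y1 + Poly_Mapping.lookup m Y2"

definition bihom :: "poly4 set \<Rightarrow> nat \<Rightarrow> nat \<Rightarrow> poly4 set" where
  "bihom S i j = {p \<in> S. \<forall>m\<in>Poly_Mapping.keys p. xdeg m = i \<and> ydeg m = j}"

definition cdim :: "poly4 set \<Rightarrow> nat" where
  "cdim V = vector_space.dim (\<lambda>c p. pconst c * p) V"

text \<open>dim M_{i,j} for M = A^m / <x,y>A^m.  Since A^m and <x,y>A^m are bihomogeneous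
  ideals, M_{i,j} = (A^m)_{i,j} / (<x,y>A^m)_{i,j}, and both pieces are finite-dimensional,
  so its dimension is the difference of dimensions.\<close>
definition catdim :: "nat \<Rightarrow> nat \<Rightarrow> nat \<Rightarrow> nat \<Rightarrow> nat" where
  "catdim m k i j =
     (let Am = ideal_pow (detideal (dihedral k)) m
      in cdim (bihom Am i j) - cdim (bihom (max_times Am) i j))"

end

theory Submission
  imports Defs
begin

text \<open>In the complex coordinates \<open>z = x\<^sub>1 + i x\<^sub>2\<close>, \<open>z' = x\<^sub>1 - i x\<^sub>2\<close> (and \<open>w, w'\<close> likewise in
  \<open>y\<close>) a rotation of \<open>I\<^sub>2(k)\<close> scales \<open>z, w\<close> by a \<open>k\<close>-th root of unity \<open>\<zeta>\<close> and \<open>z', w'\<close> by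
  \<open>\<zeta>\<^sup>-\<^sup>1\<close>, and a reflection moreover swaps \<open>z \<leftrightarrow> z'\<close>, \<open>w \<leftrightarrow> w'\<close>. Hence the determinantal
  polynomials are spanned by the antisymmetrised monomials
  \<open>z\<^sup>a z'\<^sup>b w\<^sup>c w'\<^sup>d - z\<^sup>b z'\<^sup>a w\<^sup>d w'\<^sup>c\<close> with \<open>k\<close> dividing \<open>a - b + c - d\<close>. Such an element
  lies in \<open>\<langle>x,y\<rangle>A\<close> as soon as its monomial has a proper factor of admissible weight; the only
  ones without such a factor are \<open>\<Delta> = z w' - z' w\<close> in bidegree \<open>(1,1)\<close> and
  \<open>\<theta>\<^sub>a = z\<^sup>a w\<^sup>k\<^sup>-\<^sup>a - z'\<^sup>a w'\<^sup>k\<^sup>-\<^sup>a\<close> in bidegree \<open>(a, k - a)\<close>. These \<open>k + 2\<close> elements are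
  independent modulo \<open>\<langle>x,y\<rangle>A\<close>: on the line \<open>x\<^sub>2 = i x\<^sub>1, y\<^sub>2 = i y\<^sub>1\<close> (where \<open>z = w = 0\<close>)
  every determinantal polynomial vanishes to order \<open>k\<close>, hence every element of \<open>\<langle>x,y\<rangle>A\<close> to
  order \<open>k + 1\<close>, while \<open>\<theta>\<^sub>a\<close> restricts to a nonzero multiple of \<open>x\<^sub>1\<^sup>a y\<^sub>1\<^sup>k\<^sup>-\<^sup>a\<close>; the line
  \<open>y\<^sub>2 = -i y\<^sub>1\<close> (where \<open>z = w' = 0\<close>) separates \<open>\<Delta>\<close> in the same way with orders \<open>2\<close> and \<open>3\<close>.\<close>

lemma pconst_add: "pconst (a + b) = pconst a + pconst b"
  by (simp add: pconst_def single_add)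

lemma pconst_mult: "pconst a * pconst b = pconst (a * b)"
  by (simp add: pconst_def mult_single)

lemma pconst_0 [simp]: "pconst 0 = 0"
  by (simp add: pconst_def)

lemma pconst_1 [simp]: "pconst 1 = 1"
  by (simp add: pconst_def)

lemma pconst_minus: "pconst (- a) = - pconst a"
  by (simp add: pconst_def single_uminus)

lemma pconst_diff: "pconst (a - b) = pconst a - pconst b"
  by (simp add: pconst_def single_diff)

lemma pconst_prod: "pconst (prod f S) = (\<Prod>x\<in>S. pconst (f x))"
  by (induction S rule: infinite_finite_induct) (auto simp: pconst_mult[symmetric])

lemma pconst_power: "pconst (a ^ n) = pconst a ^ n"
  by (induction n) (auto simp: pconst_mult[symmetric])

lemma pconst_mult_single: "pconst c * Poly_Mapping.single m 1 = Poly_Mapping.single m c"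
  by (simp add: pconst_def mult_single)

lemma lookup_pconst: "Poly_Mapping.lookup (pconst c) m = (if m = 0 then c else 0)"
  by (simp add: pconst_def lookup_single)

lemma lookup_pconst_mult: "Poly_Mapping.lookup (pconst c * p) m = c * Poly_Mapping.lookup p m"
proof -
  have "pconst c * p = Poly_Mapping.map ((*) c) p"
    by (simp add: pconst_def mult_map_scale_conv_mult)
  then show ?thesis
    by (simp add: Poly_Mapping.map.rep_eq when_def)
qed

lemma keys_pconst_mult: "Poly_Mapping.keys (pconst c * p) \<subseteq> Poly_Mapping.keys p"
  by (auto simp: in_keys_iff lookup_pconst_mult)

lemma poly_mapping_sum_single:
  "p = (\<Sum>m\<in>Poly_Mapping.keys p. Poly_Mapping.single m (Poly_Mapping.lookup p m))"
  by (rule poly_mapping_eqI)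
     (auto simp: lookup_sum lookup_single when_def in_keys_iff intro: sum.neutral)

lemma UNIV_var: "(UNIV :: var set) = {X1, X2, Y1, Y2}"
  by (auto intro: var.exhaust)

lemma finite_var [simp]: "finite (UNIV :: var set)"
  by (simp add: UNIV_var)

definition eval_monom :: "(var \<Rightarrow> poly4) \<Rightarrow> (var \<Rightarrow>\<^sub>0 nat) \<Rightarrow> poly4" where
  "eval_monom \<sigma> m = (\<Prod>v\<in>Poly_Mapping.keys m. \<sigma> v ^ Poly_Mapping.lookup m v)"

lemma eval_monom_UNIV: "eval_monom \<sigma> m = (\<Prod>v\<in>UNIV. \<sigma> v ^ Poly_Mapping.lookup m v)"
  unfolding eval_monom_def by (rule prod.mono_neutral_left) (auto simp: in_keys_iff)

lemma eval_monom_expand: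
  "eval_monom \<sigma> m = \<sigma> X1 ^ Poly_Mapping.lookup m X1 * \<sigma> X2 ^ Poly_Mapping.lookup m X2 *
     \<sigma> Y1 ^ Poly_Mapping.lookup m Y1 * \<sigma> Y2 ^ Poly_Mapping.lookup m Y2"
  by (simp add: eval_monom_UNIV UNIV_var mult.assoc)

lemma eval_monom_add: "eval_monom \<sigma> (a + b) = eval_monom \<sigma> a * eval_monom \<sigma> b"
  by (simp add: eval_monom_UNIV lookup_add power_add prod.distrib)

lemma eval_monom_0 [simp]: "eval_monom \<sigma> 0 = 1"
  by (simp add: eval_monom_def)

lemma pvar_power: "pvar v ^ n = Poly_Mapping.single (Poly_Mapping.single v n) 1"
  by (induction n) (auto simp: pvar_def mult_single single_add[symmetric])

lemma eval_monom_pvar: "eval_monom pvar m = Poly_Mapping.single m 1"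
proof -
  have prod_single: "(\<Prod>x\<in>S. Poly_Mapping.single (f x) (1::complex)) = Poly_Mapping.single (sum f S) 1"
    for S and f :: "var \<Rightarrow> var \<Rightarrow>\<^sub>0 nat"
    by (induction S rule: infinite_finite_induct) (auto simp: mult_single)
  have "eval_monom pvar m =
      Poly_Mapping.single (\<Sum>v\<in>Poly_Mapping.keys m. Poly_Mapping.single v (Poly_Mapping.lookup m v)) 1"
    by (simp add: eval_monom_def pvar_power prod_single)
  then show ?thesis
    using poly_mapping_sum_single[of m] by simp
qed

lemma subst_eq_sum: "subst \<sigma> p = (\<Sum>m\<in>Poly_Mapping.keys p. pconst (Poly_Mapping.lookup p m) * eval_monom \<sigma> m)"
  by (simp add: subst_def eval_monom_def)

lemma subst_eq_sum_superset:
  assumes "finite S" "Poly_Mapping.keys p \<subseteq> S"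
  shows "subst \<sigma> p = (\<Sum>m\<in>S. pconst (Poly_Mapping.lookup p m) * eval_monom \<sigma> m)"
  unfolding subst_eq_sum using assms
  by (intro sum.mono_neutral_left) (auto simp: in_keys_iff)

lemma subst_0 [simp]: "subst \<sigma> 0 = 0"
  by (simp add: subst_eq_sum)

lemma subst_add: "subst \<sigma> (p + q) = subst \<sigma> p + subst \<sigma> q"
proof -
  let ?S = "Poly_Mapping.keys p \<union> Poly_Mapping.keys q"
  have "subst \<sigma> (p + q) = (\<Sum>m\<in>?S. pconst (Poly_Mapping.lookup (p + q) m) * eval_monom \<sigma> m)"
    by (rule subst_eq_sum_superset) (auto dest: subsetD[OF keys_add])
  also have "\<dots> = (\<Sum>m\<in>?S. pconst (Poly_Mapping.lookup p m) * eval_monom \<sigma> m) +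
                  (\<Sum>m\<in>?S. pconst (Poly_Mapping.lookup q m) * eval_monom \<sigma> m)"
    by (simp add: lookup_add pconst_add distrib_right sum.distrib)
  also have "\<dots> = subst \<sigma> p + subst \<sigma> q"
    by (simp add: subst_eq_sum_superset[symmetric])
  finally show ?thesis .
qed

lemma subst_sum: "subst \<sigma> (sum f S) = (\<Sum>x\<in>S. subst \<sigma> (f x))"
  by (induction S rule: infinite_finite_induct) (auto simp: subst_add)

lemma subst_minus: "subst \<sigma> (- p) = - subst \<sigma> p"
  using subst_add[of \<sigma> p "- p"] by (simp add: eq_neg_iff_add_eq_0 add.commute)

lemma subst_diff: "subst \<sigma> (p - q) = subst \<sigma> p - subst \<sigma> q"
  using subst_add[of \<sigma> p "- q"] by (simp add: subst_minus)

lemma subst_single: "subst \<sigma> (Poly_Mapping.single m c) = pconst c * eval_monom \<sigma> m"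
  by (subst subst_eq_sum_superset[of "{m}"]) (auto simp: lookup_single)

lemma subst_mult: "subst \<sigma> (p * q) = subst \<sigma> p * subst \<sigma> q"
proof -
  have pq: "p * q = (\<Sum>a\<in>Poly_Mapping.keys p. \<Sum>b\<in>Poly_Mapping.keys q.
      Poly_Mapping.single (a + b) (Poly_Mapping.lookup p a * Poly_Mapping.lookup q b))"
    by (subst (1 2) poly_mapping_sum_single) (simp add: sum_product mult_single)
  have "subst \<sigma> (p * q) = (\<Sum>a\<in>Poly_Mapping.keys p. \<Sum>b\<in>Poly_Mapping.keys q.
      pconst (Poly_Mapping.lookup p a) * eval_monom \<sigma> a * (pconst (Poly_Mapping.lookup q b) * eval_monom \<sigma> b))"
    unfolding pq subst_sum subst_single
    by (intro sum.cong refl) (simp add: eval_monom_add pconst_mult[symmetric] mult_ac)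
  also have "\<dots> = subst \<sigma> p * subst \<sigma> q"
    by (simp add: subst_eq_sum sum_product)
  finally show ?thesis .
qed

lemma subst_pconst [simp]: "subst \<sigma> (pconst c) = pconst c"
  by (simp add: pconst_def subst_single)

lemma subst_1 [simp]: "subst \<sigma> 1 = 1"
  using subst_pconst[of \<sigma> 1] by simp

lemma subst_pvar [simp]: "subst \<sigma> (pvar v) = \<sigma> v"
  by (simp add: pvar_def subst_single eval_monom_def)

lemma subst_power: "subst \<sigma> (p ^ n) = subst \<sigma> p ^ n"
  by (induction n) (auto simp: subst_mult)

lemma subst_prod: "subst \<sigma> (prod f S) = (\<Prod>x\<in>S. subst \<sigma> (f x))"
  by (induction S rule: infinite_finite_induct) (auto simp: subst_mult)

lemma subst_subst: "subst \<sigma> (subst \<tau> p) = subst (\<lambda>v. subst \<sigma> (\<tau> v)) p"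
proof -
  have "subst \<sigma> (eval_monom \<tau> m) = eval_monom (\<lambda>v. subst \<sigma> (\<tau> v)) m" for m
    by (simp add: eval_monom_def subst_prod subst_power)
  then show ?thesis
    by (simp add: subst_eq_sum[of \<tau>] subst_sum subst_mult subst_eq_sum[of "\<lambda>v. subst \<sigma> (\<tau> v)"])
qed

lemma subst_pvar_id: "subst pvar p = p"
  by (simp add: subst_eq_sum eval_monom_pvar pconst_mult_single poly_mapping_sum_single[symmetric])

definition exps :: "nat \<Rightarrow> nat \<Rightarrow> nat \<Rightarrow> nat \<Rightarrow> (var \<Rightarrow>\<^sub>0 nat)" where
  "exps a b c d = Poly_Mapping.single X1 a + Poly_Mapping.single X2 b +
     Poly_Mapping.single Y1 c + Poly_Mapping.single Y2 d"

lemma lookup_exps [simp]: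
  "Poly_Mapping.lookup (exps a b c d) X1 = a"
  "Poly_Mapping.lookup (exps a b c d) X2 = b"
  "Poly_Mapping.lookup (exps a b c d) Y1 = c"
  "Poly_Mapping.lookup (exps a b c d) Y2 = d"
  by (simp_all add: exps_def lookup_add lookup_single)

lemma exps_lookup: "m = exps (Poly_Mapping.lookup m X1) (Poly_Mapping.lookup m X2)
    (Poly_Mapping.lookup m Y1) (Poly_Mapping.lookup m Y2)"
  by (rule poly_mapping_eqI) (case_tac k; simp)

lemma exps_eq_iff [simp]: "exps a b c d = exps a' b' c' d' \<longleftrightarrow> a = a' \<and> b = b' \<and> c = c' \<and> d = d'"
  by (metis lookup_exps)

lemma exps_0: "exps 0 0 0 0 = 0"
  by (simp add: exps_def)

definition tdeg :: "(var \<Rightarrow>\<^sub>0 nat) \<Rightarrow> nat" where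
  "tdeg m = xdeg m + ydeg m"

lemma xdeg_add: "xdeg (a + b) = xdeg a + xdeg b"
  by (simp add: xdeg_def lookup_add)

lemma ydeg_add: "ydeg (a + b) = ydeg a + ydeg b"
  by (simp add: ydeg_def lookup_add)

lemma tdeg_add: "tdeg (a + b) = tdeg a + tdeg b"
  by (simp add: tdeg_def xdeg_add ydeg_add)

lemma tdeg_eq_0_iff: "tdeg m = 0 \<longleftrightarrow> m = 0"
proof
  assume "tdeg m = 0"
  then have "m = exps 0 0 0 0"
    by (subst exps_lookup) (simp add: tdeg_def xdeg_def ydeg_def)
  then show "m = 0"
    by (simp add: exps_0)
qed (simp add: tdeg_def xdeg_def ydeg_def)

definition bihomog :: "nat \<Rightarrow> nat \<Rightarrow> poly4 \<Rightarrow> bool" where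
  "bihomog i j p \<longleftrightarrow> (\<forall>m\<in>Poly_Mapping.keys p. xdeg m = i \<and> ydeg m = j)"

lemma bihom_eq: "bihom S i j = {p\<in>S. bihomog i j p}"
  by (simp add: bihom_def bihomog_def)

lemma bihomog_0 [simp]: "bihomog i j 0"
  by (simp add: bihomog_def)

lemma bihomog_add: "bihomog i j p \<Longrightarrow> bihomog i j q \<Longrightarrow> bihomog i j (p + q)"
  unfolding bihomog_def by (auto dest!: subsetD[OF keys_add])

lemma bihomog_smult: "bihomog i j p \<Longrightarrow> bihomog i j (pconst c * p)"
  unfolding bihomog_def by (auto dest!: subsetD[OF keys_pconst_mult])

lemma bihomog_diff: "bihomog i j p \<Longrightarrow> bihomog i j q \<Longrightarrow> bihomog i j (p - q)"
  using bihomog_add[of i j p "- q"] by (simp add: bihomog_def)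

lemma bihomog_sum: "(\<And>x. x \<in> S \<Longrightarrow> bihomog i j (f x)) \<Longrightarrow> bihomog i j (sum f S)"
  by (induction S rule: infinite_finite_induct) (auto intro: bihomog_add)

lemma bihomog_mult: "bihomog i j p \<Longrightarrow> bihomog i' j' q \<Longrightarrow> bihomog (i + i') (j + j') (p * q)"
  unfolding bihomog_def by (auto simp: xdeg_add ydeg_add dest!: subsetD[OF keys_mult])

lemma bihomog_pconst: "bihomog 0 0 (pconst c)"
  by (simp add: bihomog_def xdeg_def ydeg_def pconst_def)

lemma bihomog_power: "bihomog i j p \<Longrightarrow> bihomog (n * i) (n * j) (p ^ n)"
  by (induction n) (simp_all add: bihomog_pconst[of 1, simplified] bihomog_mult)

lemma bihomog_pvar [simp]:
  "bihomog 1 0 (pvar X1)" "bihomog 1 0 (pvar X2)" "bihomog 0 1 (pvar Y1)" "bihomog 0 1 (pvar Y2)"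
  by (simp_all add: bihomog_def pvar_def xdeg_def ydeg_def lookup_single)

lemma bihomog_subst:
  assumes "bihomog 1 0 (\<sigma> X1)" "bihomog 1 0 (\<sigma> X2)" "bihomog 0 1 (\<sigma> Y1)" "bihomog 0 1 (\<sigma> Y2)"
    and "bihomog i j p"
  shows "bihomog i j (subst \<sigma> p)"
  unfolding subst_eq_sum
proof (rule bihomog_sum)
  fix m assume "m \<in> Poly_Mapping.keys p"
  then have ij: "xdeg m = i" "ydeg m = j"
    using assms(5) by (auto simp: bihomog_def)
  have "bihomog (Poly_Mapping.lookup m X1 * 1 + Poly_Mapping.lookup m X2 * 1 +
                 Poly_Mapping.lookup m Y1 * 0 + Poly_Mapping.lookup m Y2 * 0)
                (Poly_Mapping.lookup m X1 * 0 + Poly_Mapping.lookup m X2 * 0 +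
                 Poly_Mapping.lookup m Y1 * 1 + Poly_Mapping.lookup m Y2 * 1)
          (eval_monom \<sigma> m)"
    unfolding eval_monom_expand by (intro bihomog_mult bihomog_power assms(1-4))
  then have "bihomog i j (eval_monom \<sigma> m)"
    using ij by (simp add: xdeg_def ydeg_def)
  then show "bihomog i j (pconst (Poly_Mapping.lookup p m) * eval_monom \<sigma> m)"
    using bihomog_mult[OF bihomog_pconst] by fastforce
qed

lemma lookup_eq_0_if_bihomog:
  assumes "bihomog i j p" "(xdeg m, ydeg m) \<noteq> (i, j)"
  shows "Poly_Mapping.lookup p m = 0"
  using assms by (auto simp: bihomog_def in_keys_iff)


definition const_free :: "poly4 \<Rightarrow> bool" where
  "const_free p \<longleftrightarrow> Poly_Mapping.lookup p 0 = 0"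

lemma const_free_mult: "const_free p \<Longrightarrow> const_free (p * q)"
proof (rule ccontr)
  assume "const_free p" "\<not> const_free (p * q)"
  then have "0 \<in> Poly_Mapping.keys (p * q)"
    by (simp add: const_free_def in_keys_iff)
  then obtain a b where "0 = a + b" "a \<in> Poly_Mapping.keys p"
    using keys_mult[of p q] by blast
  then have "0 \<in> Poly_Mapping.keys p"
    by (metis add_cancel_right_left lookup_add lookup_zero poly_mapping_eqI zero_eq_add_iff_both_eq_0)
  then show False
    using \<open>const_free p\<close> by (simp add: const_free_def in_keys_iff)
qed

lemma const_free_mult_right: "const_free q \<Longrightarrow> const_free (p * q)"
  using const_free_mult[of q p] by (simp add: mult.commute)

lemma const_free_power: "const_free p \<Longrightarrow> n > 0 \<Longrightarrow> const_free (p ^ n)"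
  by (cases n) (auto intro: const_free_mult)

lemma const_free_add: "const_free p \<Longrightarrow> const_free q \<Longrightarrow> const_free (p + q)"
  by (simp add: const_free_def lookup_add)

lemma const_free_smult: "const_free p \<Longrightarrow> const_free (pconst c * p)"
  by (simp add: const_free_def lookup_pconst_mult)

lemma const_free_eval_monom:
  assumes "\<And>v. const_free (\<sigma> v)" "m \<noteq> 0"
  shows "const_free (eval_monom \<sigma> m)"
proof -
  obtain v where v: "Poly_Mapping.lookup m v \<noteq> 0"
    using assms(2) by (metis poly_mapping_eqI lookup_zero)
  have "eval_monom \<sigma> m =
      \<sigma> v ^ Poly_Mapping.lookup m v * (\<Prod>u\<in>UNIV - {v}. \<sigma> u ^ Poly_Mapping.lookup m u)"
    unfolding eval_monom_UNIV by (rule prod.remove) auto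
  then show ?thesis
    using v assms(1) by (simp add: const_free_mult const_free_power)
qed

lemma lookup_0_subst:
  assumes "\<And>v. const_free (\<sigma> v)"
  shows "Poly_Mapping.lookup (subst \<sigma> p) 0 = Poly_Mapping.lookup p 0"
proof -
  have "subst \<sigma> p = (\<Sum>m\<in>insert 0 (Poly_Mapping.keys p). pconst (Poly_Mapping.lookup p m) * eval_monom \<sigma> m)"
    by (rule subst_eq_sum_superset) auto
  then have "Poly_Mapping.lookup (subst \<sigma> p) 0 = (\<Sum>m\<in>insert 0 (Poly_Mapping.keys p).
      Poly_Mapping.lookup p m * Poly_Mapping.lookup (eval_monom \<sigma> m) 0)"
    by (simp add: lookup_sum lookup_pconst_mult)
  also have "\<dots> = Poly_Mapping.lookup p 0 * Poly_Mapping.lookup (eval_monom \<sigma> 0) 0"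
    using const_free_eval_monom[OF assms]
    by (intro sum.mono_neutral_left[symmetric, where S = "{0}", simplified]) (auto simp: const_free_def)
  finally show ?thesis
    by simp
qed

lemma const_free_subst: "(\<And>v. const_free (\<sigma> v)) \<Longrightarrow> const_free p \<Longrightarrow> const_free (subst \<sigma> p)"
  by (simp add: const_free_def lookup_0_subst)


definition diag_scaling :: "(var \<Rightarrow> complex) \<Rightarrow> var \<Rightarrow> poly4" where
  "diag_scaling lam v = pconst (lam v) * pvar v"

lemma eval_monom_diag_scaling:
  "eval_monom (diag_scaling lam) m =
     pconst (\<Prod>v\<in>UNIV. lam v ^ Poly_Mapping.lookup m v) * Poly_Mapping.single m 1"
proof -
  have "eval_monom (diag_scaling lam) m =
      (\<Prod>v\<in>UNIV. pconst (lam v ^ Poly_Mapping.lookup m v) * pvar v ^ Poly_Mapping.lookup m v)"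
    by (simp add: eval_monom_UNIV diag_scaling_def power_mult_distrib pconst_power)
  also have "\<dots> = pconst (\<Prod>v\<in>UNIV. lam v ^ Poly_Mapping.lookup m v) * eval_monom pvar m"
    by (simp add: prod.distrib pconst_prod eval_monom_UNIV)
  finally show ?thesis
    by (simp add: eval_monom_pvar)
qed

lemma lookup_subst_diag_scaling:
  "Poly_Mapping.lookup (subst (diag_scaling lam) p) m =
     (\<Prod>v\<in>UNIV. lam v ^ Poly_Mapping.lookup m v) * Poly_Mapping.lookup p m"
proof -
  have "subst (diag_scaling lam) p = (\<Sum>m'\<in>insert m (Poly_Mapping.keys p).
      pconst (Poly_Mapping.lookup p m') * eval_monom (diag_scaling lam) m')"
    by (rule subst_eq_sum_superset) auto
  then have "Poly_Mapping.lookup (subst (diag_scaling lam) p) m = (\<Sum>m'\<in>insert m (Poly_Mapping.keys p).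
      Poly_Mapping.lookup p m' * ((\<Prod>v\<in>UNIV. lam v ^ Poly_Mapping.lookup m' v) *
        Poly_Mapping.lookup (Poly_Mapping.single m' 1) m))"
    by (simp add: lookup_sum lookup_pconst_mult eval_monom_diag_scaling)
  also have "\<dots> = Poly_Mapping.lookup p m * (\<Prod>v\<in>UNIV. lam v ^ Poly_Mapping.lookup m v)"
    by (subst sum.remove[of _ m]) (auto simp: lookup_single intro!: sum.neutral)
  finally show ?thesis
    by (simp add: mult.commute)
qed

lemma weight_eq_1_if_diag_scaling_fixed:
  assumes "subst (diag_scaling lam) q = q" "m \<in> Poly_Mapping.keys q"
  shows "(\<Prod>v\<in>UNIV. lam v ^ Poly_Mapping.lookup m v) = 1"
proof -
  have "Poly_Mapping.lookup q m = (\<Prod>v\<in>UNIV. lam v ^ Poly_Mapping.lookup m v) * Poly_Mapping.lookup q m"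
    using lookup_subst_diag_scaling[of lam q m] assms(1) by simp
  moreover have "Poly_Mapping.lookup q m \<noteq> 0"
    using assms(2) by (simp add: in_keys_iff)
  ultimately show ?thesis
    by simp
qed

section \<open>The dihedral action in complex coordinates\<close>

lemma cis_2pi_frac_eq_1_iff:
  assumes "k > 0"
  shows "cis (2 * pi * of_int n / real k) = 1 \<longleftrightarrow> int k dvd n"
proof
  assume "cis (2 * pi * of_int n / real k) = 1"
  then have "cos (2 * pi * of_int n / real k) = 1"
    by (metis cis.sel(1) one_complex.sel(1))
  then obtain m :: int where "2 * pi * of_int n / real k = of_int m * 2 * pi"
    by (auto simp: cos_one_2pi_int)
  then have "of_int n = real_of_int (m * int k)"
    using assms by (simp add: field_simps)
  then show "int k dvd n"
    by (metis dvd_triv_right of_int_eq_iff)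
next
  assume "int k dvd n"
  then obtain m where "n = int k * m" by blast
  then have "2 * pi * of_int n / real k = 2 * pi * of_int m"
    using assms by simp
  then show "cis (2 * pi * of_int n / real k) = 1"
    by simp
qed

lemma cis_eq: "cis t = complex_of_real (cos t) + \<i> * complex_of_real (sin t)"
  by (simp add: complex_eq_iff)

definition xform :: "complex \<Rightarrow> complex \<Rightarrow> poly4" where
  "xform a b = pconst a * pvar X1 + pconst b * pvar X2"

definition yform :: "complex \<Rightarrow> complex \<Rightarrow> poly4" where
  "yform a b = pconst a * pvar Y1 + pconst b * pvar Y2"

lemma xform_add: "xform a b + xform a' b' = xform (a + a') (b + b')"
  by (simp add: xform_def pconst_add algebra_simps)

lemma yform_add: "yform a b + yform a' b' = yform (a + a') (b + b')"
  by (simp add: yform_def pconst_add algebra_simps)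

lemma xform_diff: "xform a b - xform a' b' = xform (a - a') (b - b')"
  by (simp add: xform_def pconst_diff algebra_simps)

lemma yform_diff: "yform a b - yform a' b' = yform (a - a') (b - b')"
  by (simp add: yform_def pconst_diff algebra_simps)

lemma xform_smult: "pconst c * xform a b = xform (c * a) (c * b)"
  by (simp add: xform_def pconst_mult[symmetric] algebra_simps)

lemma yform_smult: "pconst c * yform a b = yform (c * a) (c * b)"
  by (simp add: yform_def pconst_mult[symmetric] algebra_simps)

lemma subst_xform: "subst \<sigma> (xform a b) = pconst a * \<sigma> X1 + pconst b * \<sigma> X2"
  by (simp add: xform_def subst_add subst_mult)

lemma subst_yform: "subst \<sigma> (yform a b) = pconst a * \<sigma> Y1 + pconst b * \<sigma> Y2"
  by (simp add: yform_def subst_add subst_mult)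

lemma xform_pvar: "xform 1 0 = pvar X1" "xform 0 1 = pvar X2"
  by (simp_all add: xform_def)

lemma yform_pvar: "yform 1 0 = pvar Y1" "yform 0 1 = pvar Y2"
  by (simp_all add: yform_def)

lemma const_free_pvar: "const_free (pvar v)"
proof -
  have "Poly_Mapping.single v (1::nat) \<noteq> 0"
    by (metis lookup_single_eq lookup_zero one_neq_zero)
  then show ?thesis
    by (simp add: const_free_def pvar_def lookup_single)
qed

lemma const_free_xform: "const_free (xform a b)"
  by (simp add: xform_def const_free_add const_free_smult const_free_pvar)

lemma const_free_yform: "const_free (yform a b)"
  by (simp add: yform_def const_free_add const_free_smult const_free_pvar)

lemma bihomog_xform: "bihomog 1 0 (xform a b)"
  unfolding xform_def by (intro bihomog_add bihomog_smult bihomog_pvar)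

lemma bihomog_yform: "bihomog 0 1 (yform a b)"
  unfolding yform_def by (intro bihomog_add bihomog_smult bihomog_pvar)

definition act_subst :: "mat2 \<Rightarrow> var \<Rightarrow> poly4" where
  "act_subst w v = (case v of X1 \<Rightarrow> xform (w 0 0) (w 0 1) | X2 \<Rightarrow> xform (w 1 0) (w 1 1)
     | Y1 \<Rightarrow> yform (w 0 0) (w 0 1) | Y2 \<Rightarrow> yform (w 1 0) (w 1 1))"

lemma act_eq_subst: "act w p = subst (act_subst w) p"
  unfolding act_def act_subst_def xform_def yform_def by simp

lemma act_diff: "act w (p - q) = act w p - act w q"
  by (simp add: act_eq_subst subst_diff)

lemma lookup_0_act: "Poly_Mapping.lookup (act w p) 0 = Poly_Mapping.lookup p 0"
  unfolding act_eq_subst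
  by (rule lookup_0_subst) (simp add: act_subst_def const_free_xform const_free_yform split: var.split)

lemma rot_entries:
  "rot k j 0 0 = complex_of_real (cos (2 * pi * real j / real k))"
  "rot k j 0 1 = - complex_of_real (sin (2 * pi * real j / real k))"
  "rot k j 1 0 = complex_of_real (sin (2 * pi * real j / real k))"
  "rot k j 1 1 = complex_of_real (cos (2 * pi * real j / real k))"
  by (simp_all add: rot_def Let_def)

lemma refl_entries:
  "refl k j 0 0 = complex_of_real (cos (2 * pi * real j / real k))"
  "refl k j 0 1 = complex_of_real (sin (2 * pi * real j / real k))"
  "refl k j 1 0 = complex_of_real (sin (2 * pi * real j / real k))"
  "refl k j 1 1 = - complex_of_real (cos (2 * pi * real j / real k))"
  by (simp_all add: refl_def Let_def)

lemma cos_sin_complex_squared_add: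
  "complex_of_real (cos x) * complex_of_real (cos x) + complex_of_real (sin x) * complex_of_real (sin x) = 1"
proof -
  have "complex_of_real (cos x * cos x + sin x * sin x) = 1"
    using sin_cos_squared_add[of x] by (simp only: power2_eq_square) simp
  then show ?thesis
    by (simp only: of_real_add of_real_mult)
qed

lemma det2_rot: "det2 (rot k j) = 1"
  unfolding det2_def rot_entries using cos_sin_complex_squared_add by (simp add: algebra_simps)

lemma det2_refl: "det2 (refl k j) = -1"
  unfolding det2_def refl_entries using cos_sin_complex_squared_add by (simp add: algebra_simps)

definition cz :: poly4 where "cz = xform 1 \<i>"
definition czb :: poly4 where "czb = xform 1 (- \<i>)"
definition cw :: poly4 where "cw = yform 1 \<i>"
definition cwb :: poly4 where "cwb = yform 1 (- \<i>)"

definition to_cc :: "var \<Rightarrow> poly4" where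
  "to_cc v = (case v of X1 \<Rightarrow> cz | X2 \<Rightarrow> czb | Y1 \<Rightarrow> cw | Y2 \<Rightarrow> cwb)"

definition from_cc :: "var \<Rightarrow> poly4" where
  "from_cc v = (case v of X1 \<Rightarrow> xform (1/2) (1/2) | X2 \<Rightarrow> xform (- \<i>/2) (\<i>/2)
     | Y1 \<Rightarrow> yform (1/2) (1/2) | Y2 \<Rightarrow> yform (- \<i>/2) (\<i>/2))"

lemma subst_cc:
  "subst \<sigma> cz = \<sigma> X1 + pconst \<i> * \<sigma> X2"
  "subst \<sigma> czb = \<sigma> X1 - pconst \<i> * \<sigma> X2"
  "subst \<sigma> cw = \<sigma> Y1 + pconst \<i> * \<sigma> Y2"
  "subst \<sigma> cwb = \<sigma> Y1 - pconst \<i> * \<sigma> Y2"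
  by (simp_all add: cz_def czb_def cw_def cwb_def subst_xform subst_yform pconst_minus)

lemma subst_to_cc_from_cc: "subst to_cc (subst from_cc p) = p"
proof -
  have "subst to_cc (from_cc v) = pvar v" for v
    by (cases v) (simp_all add: from_cc_def subst_xform subst_yform to_cc_def cz_def czb_def cw_def cwb_def
        xform_smult yform_smult xform_add yform_add xform_pvar[symmetric] yform_pvar[symmetric])
  then show ?thesis
    by (simp add: subst_subst subst_pvar_id)
qed

lemma subst_from_cc_to_cc: "subst from_cc (subst to_cc p) = p"
proof -
  have "subst from_cc (to_cc v) = pvar v" for v
    by (cases v) (simp_all add: from_cc_def subst_cc to_cc_def xform_smult yform_smult
        xform_add yform_add xform_diff yform_diff xform_pvar[symmetric] yform_pvar[symmetric])
  then show ?thesis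
    by (simp add: subst_subst subst_pvar_id)
qed

definition cmon :: "nat \<Rightarrow> nat \<Rightarrow> nat \<Rightarrow> nat \<Rightarrow> poly4" where
  "cmon a b c d = cz ^ a * czb ^ b * cw ^ c * cwb ^ d"

lemma eval_monom_to_cc:
  "eval_monom to_cc m = cmon (Poly_Mapping.lookup m X1) (Poly_Mapping.lookup m X2)
     (Poly_Mapping.lookup m Y1) (Poly_Mapping.lookup m Y2)"
  by (simp add: eval_monom_expand to_cc_def cmon_def)

lemma cmon_add: "cmon (a + a') (b + b') (c + c') (d + d') = cmon a b c d * cmon a' b' c' d'"
  by (simp add: cmon_def power_add algebra_simps)

lemma const_free_cmon: "a + b + c + d > 0 \<Longrightarrow> const_free (cmon a b c d)"
  unfolding cmon_def cz_def czb_def cw_def cwb_def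
  by (cases "a > 0"; cases "b > 0"; cases "c > 0"; cases "d > 0")
     (auto intro: const_free_mult const_free_mult_right const_free_power const_free_xform const_free_yform)

lemma bihomog_cmon: "bihomog (a + b) (c + d) (cmon a b c d)"
proof -
  have "bihomog (a * 1 + b * 1 + c * 0 + d * 0) (a * 0 + b * 0 + c * 1 + d * 1) (cmon a b c d)"
    unfolding cmon_def cz_def czb_def cw_def cwb_def
    by (intro bihomog_mult bihomog_power bihomog_xform bihomog_yform)
  then show ?thesis
    by simp
qed

lemma act_subst_cc:
  "subst (act_subst w) cz = xform (w 0 0 + \<i> * w 1 0) (w 0 1 + \<i> * w 1 1)"
  "subst (act_subst w) czb = xform (w 0 0 - \<i> * w 1 0) (w 0 1 - \<i> * w 1 1)"
  "subst (act_subst w) cw = yform (w 0 0 + \<i> * w 1 0) (w 0 1 + \<i> * w 1 1)"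
  "subst (act_subst w) cwb = yform (w 0 0 - \<i> * w 1 0) (w 0 1 - \<i> * w 1 1)"
  unfolding cz_def czb_def cw_def cwb_def subst_xform subst_yform
  by (simp_all add: act_subst_def xform_smult yform_smult xform_add yform_add algebra_simps)

lemma act_subst_rot_cc:
  fixes k j :: nat
  defines "\<theta> \<equiv> 2 * pi * real j / real k"
  shows "subst (act_subst (rot k j)) cz = pconst (cis \<theta>) * cz"
    and "subst (act_subst (rot k j)) czb = pconst (cis (- \<theta>)) * czb"
    and "subst (act_subst (rot k j)) cw = pconst (cis \<theta>) * cw"
    and "subst (act_subst (rot k j)) cwb = pconst (cis (- \<theta>)) * cwb"
  unfolding \<theta>_def act_subst_cc
  unfolding rot_entries cz_def czb_def cw_def cwb_def xform_smult yform_smult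
  by (intro arg_cong2[where f = xform] arg_cong2[where f = yform]; simp add: cis_eq algebra_simps)+

lemma act_subst_refl_cc:
  fixes k j :: nat
  defines "\<theta> \<equiv> 2 * pi * real j / real k"
  shows "subst (act_subst (refl k j)) cz = pconst (cis \<theta>) * czb"
    and "subst (act_subst (refl k j)) czb = pconst (cis (- \<theta>)) * cz"
    and "subst (act_subst (refl k j)) cw = pconst (cis \<theta>) * cwb"
    and "subst (act_subst (refl k j)) cwb = pconst (cis (- \<theta>)) * cw"
  unfolding \<theta>_def act_subst_cc
  unfolding refl_entries cz_def czb_def cw_def cwb_def xform_smult yform_smult
  by (intro arg_cong2[where f = xform] arg_cong2[where f = yform]; simp add: cis_eq algebra_simps)+

definition cweight :: "nat \<Rightarrow> nat \<Rightarrow> nat \<Rightarrow> nat \<Rightarrow> int" where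
  "cweight a b c d = int a - int b + int c - int d"

lemma pconst_mult_power4:
  "(pconst \<alpha> * x) ^ a * (pconst \<beta> * y) ^ b * (pconst \<gamma> * z) ^ c * (pconst \<delta> * u) ^ d
     = pconst (\<alpha> ^ a * \<beta> ^ b * \<gamma> ^ c * \<delta> ^ d) * (x ^ a * y ^ b * z ^ c * u ^ d)"
  by (simp add: power_mult_distrib pconst_power pconst_mult[symmetric] mult_ac)

lemma cis_cweight:
  "cis t ^ a * cis (- t) ^ b * cis t ^ c * cis (- t) ^ d = cis (t * of_int (cweight a b c d))"
  by (simp add: cweight_def DeMoivre cis_mult algebra_simps)

lemma act_rot_cmon:
  "act (rot k j) (cmon a b c d) =
     pconst (cis (2 * pi * real j / real k * of_int (cweight a b c d))) * cmon a b c d"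
  unfolding act_eq_subst cmon_def subst_mult subst_power act_subst_rot_cc pconst_mult_power4 cis_cweight ..

lemma act_refl_cmon:
  "act (refl k j) (cmon a b c d) =
     pconst (cis (2 * pi * real j / real k * of_int (cweight a b c d))) * cmon b a d c"
proof -
  have "act (refl k j) (cmon a b c d) =
      pconst (cis (2 * pi * real j / real k * of_int (cweight a b c d))) * (czb ^ a * cz ^ b * cwb ^ c * cw ^ d)"
    unfolding act_eq_subst cmon_def subst_mult subst_power act_subst_refl_cc pconst_mult_power4 cis_cweight ..
  then show ?thesis
    by (simp add: cmon_def mult_ac)
qed

definition acmon :: "nat \<Rightarrow> nat \<Rightarrow> nat \<Rightarrow> nat \<Rightarrow> poly4" where
  "acmon a b c d = cmon a b c d - cmon b a d c"

lemma acmon_swap: "acmon b a d c = - acmon a b c d"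
  by (simp add: acmon_def)

lemma cweight_swap: "cweight b a d c = - cweight a b c d"
  by (simp add: cweight_def)

lemma bihomog_acmon: "bihomog (a + b) (c + d) (acmon a b c d)"
  unfolding acmon_def
  by (rule bihomog_diff) (use bihomog_cmon[of a b c d] bihomog_cmon[of b a d c] in \<open>simp_all add: add.commute\<close>)

lemma cis_multiple_eq_1:
  assumes "k > 0" "int k dvd n"
  shows "cis (2 * pi * real j / real k * of_int n) = 1"
proof -
  have eq: "2 * pi * real j / real k * of_int n = 2 * pi * of_int (int j * n) / real k"
    by simp
  have "int k dvd int j * n"
    using assms(2) by simp
  then show ?thesis
    unfolding eq by (subst cis_2pi_frac_eq_1_iff[OF assms(1)])
qed

lemma determinantal_acmon:
  assumes k: "k > 0" and dvd: "int k dvd cweight a b c d"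
  shows "determinantal (dihedral k) (acmon a b c d)"
  unfolding determinantal_def
proof
  fix w assume "w \<in> dihedral k"
  then obtain j where w: "w = rot k j \<or> w = refl k j"
    by (auto simp: dihedral_def)
  have c1: "cis (2 * pi * real j / real k * of_int (cweight a b c d)) = 1"
    by (rule cis_multiple_eq_1[OF k dvd])
  have c2: "cis (2 * pi * real j / real k * of_int (cweight b a d c)) = 1"
    by (rule cis_multiple_eq_1[OF k]) (simp add: cweight_swap[of b a d c] dvd)
  from w show "act w (acmon a b c d) = pconst (det2 w) * acmon a b c d"
  proof
    assume w: "w = rot k j"
    show ?thesis
      unfolding w acmon_def act_diff act_rot_cmon c1 c2 det2_rot by simp
  next
    assume w: "w = refl k j"
    show ?thesis
      unfolding w acmon_def act_diff act_refl_cmon c1 c2 det2_refl by (simp add: pconst_minus)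
  qed
qed

interpretation pmod: module "(*) :: poly4 \<Rightarrow> poly4 \<Rightarrow> poly4"
  by standard (simp_all add: distrib_left distrib_right mult.assoc)

interpretation cvec: vector_space "\<lambda>c (p::poly4). pconst c * p"
  by standard (simp_all add: distrib_left distrib_right pconst_add mult.assoc[symmetric] pconst_mult)

abbreviation Ddih :: "nat \<Rightarrow> poly4 set" where
  "Ddih k \<equiv> {p. determinantal (dihedral k) p}"

abbreviation Adih :: "nat \<Rightarrow> poly4 set" where
  "Adih k \<equiv> detideal (dihedral k)"

abbreviation Mdih :: "nat \<Rightarrow> poly4 set" where
  "Mdih k \<equiv> max_times (Adih k)"

lemma Adih_eq_span: "Adih k = pmod.span (Ddih k)"
  by (simp add: detideal_def ideal_gen_def)

lemma Mdih_eq_span: "Mdih k = pmod.span {f * a | f a. const_free f \<and> a \<in> Adih k}"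
  by (simp add: max_times_def ideal_gen_def const_free_def)

lemma ideal_pow_1: "ideal_pow (pmod.span S) 1 = pmod.span S"
proof -
  have "pmod.span {a * b |a b. a \<in> UNIV \<and> b \<in> pmod.span S} = pmod.span S"
  proof (rule pmod.span_subspace)
    show "{a * b |a b. a \<in> UNIV \<and> b \<in> pmod.span S} \<subseteq> pmod.span S"
      by (auto intro: pmod.span_scale)
    show "pmod.span S \<subseteq> pmod.span {a * b |a b. a \<in> UNIV \<and> b \<in> pmod.span S}"
    proof
      fix x assume "x \<in> pmod.span S"
      then have "x \<in> {a * b |a b. a \<in> UNIV \<and> b \<in> pmod.span S}"
        by (intro CollectI exI[of _ 1] exI[of _ x]) simp
      then show "x \<in> pmod.span {a * b |a b. a \<in> UNIV \<and> b \<in> pmod.span S}"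
        by (rule pmod.span_base)
    qed
  qed (rule pmod.subspace_span)
  then show ?thesis
    by (simp add: ideal_gen_def)
qed

lemma Ddih_subset_Adih: "d \<in> Ddih k \<Longrightarrow> d \<in> Adih k"
  unfolding Adih_eq_span by (rule pmod.span_base)

lemma Mdih_subset_Adih: "x \<in> Mdih k \<Longrightarrow> x \<in> Adih k"
  unfolding Mdih_eq_span
  by (rule subsetD[OF pmod.span_minimal])
     (auto simp: Adih_eq_span intro: pmod.span_scale pmod.subspace_span)

lemma const_free_mult_in_Mdih: "const_free f \<Longrightarrow> a \<in> Adih k \<Longrightarrow> f * a \<in> Mdih k"
  unfolding Mdih_eq_span by (rule pmod.span_base) auto

lemma Mdih_add: "x \<in> Mdih k \<Longrightarrow> y \<in> Mdih k \<Longrightarrow> x + y \<in> Mdih k"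
  unfolding Mdih_eq_span by (rule pmod.span_add)

lemma Mdih_mult: "x \<in> Mdih k \<Longrightarrow> c * x \<in> Mdih k"
  unfolding Mdih_eq_span by (rule pmod.span_scale)

lemma Mdih_0: "0 \<in> Mdih k"
  unfolding Mdih_eq_span by (rule pmod.span_zero)

lemma refl_0_in_dihedral: "0 < k \<Longrightarrow> refl k 0 \<in> dihedral k"
  by (auto simp: dihedral_def)

lemma rot_1_in_dihedral: "1 < k \<Longrightarrow> rot k 1 \<in> dihedral k"
  by (auto simp: dihedral_def)

lemma act_rot_1_Ddih: "1 < k \<Longrightarrow> d \<in> Ddih k \<Longrightarrow> act (rot k 1) d = d"
  using rot_1_in_dihedral[of k] by (simp add: determinantal_def det2_rot)

lemma act_refl_0_Ddih: "0 < k \<Longrightarrow> d \<in> Ddih k \<Longrightarrow> act (refl k 0) d = - d"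
  using refl_0_in_dihedral[of k] by (simp add: determinantal_def det2_refl pconst_minus)

lemma const_free_Ddih:
  assumes "0 < k" "d \<in> Ddih k"
  shows "const_free d"
  using lookup_0_act[of "refl k 0" d] act_refl_0_Ddih[OF assms]
  by (simp add: const_free_def lookup_minus)

definition monom_cweight :: "(var \<Rightarrow>\<^sub>0 nat) \<Rightarrow> int" where
  "monom_cweight m = cweight (Poly_Mapping.lookup m X1) (Poly_Mapping.lookup m X2)
     (Poly_Mapping.lookup m Y1) (Poly_Mapping.lookup m Y2)"

definition cc_scaling :: "complex \<Rightarrow> var \<Rightarrow> complex" where
  "cc_scaling \<mu> v = (case v of X1 \<Rightarrow> \<mu> | X2 \<Rightarrow> inverse \<mu> | Y1 \<Rightarrow> \<mu> | Y2 \<Rightarrow> inverse \<mu>)"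

lemma act_subst_rot_to_cc:
  "subst (act_subst (rot k j)) (to_cc v) =
     subst to_cc (diag_scaling (cc_scaling (cis (2 * pi * real j / real k))) v)"
  by (cases v) (simp_all add: to_cc_def diag_scaling_def cc_scaling_def subst_mult cis_inverse
      act_subst_rot_cc)

lemma prod_cc_scaling_cis:
  "(\<Prod>v\<in>UNIV. cc_scaling (cis t) v ^ Poly_Mapping.lookup m v) = cis (t * of_int (monom_cweight m))"
  by (simp add: UNIV_var cc_scaling_def mult.assoc cis_inverse monom_cweight_def
      flip: cis_cweight)

lemma cc_expansion:
  "p = (\<Sum>m\<in>Poly_Mapping.keys (subst from_cc p).
          pconst (Poly_Mapping.lookup (subst from_cc p) m) * eval_monom to_cc m)"
  using subst_eq_sum[of to_cc "subst from_cc p"] by (simp add: subst_to_cc_from_cc)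

text \<open>Invariance under the rotation by \<open>2\<pi>/k\<close> forces every complex monomial occurring in a
  determinantal polynomial to have weight divisible by \<open>k\<close>.\<close>

lemma cc_keys_Ddih:
  assumes k: "2 \<le> k" and d: "d \<in> Ddih k" and m: "m \<in> Poly_Mapping.keys (subst from_cc d)"
  shows "int k dvd monom_cweight m" and "m \<noteq> 0"
proof -
  let ?t = "2 * pi * real 1 / real k"
  let ?d' = "subst from_cc d"
  have "subst to_cc (subst (diag_scaling (cc_scaling (cis ?t))) ?d') =
      subst (act_subst (rot k 1)) (subst to_cc ?d')"
    by (simp only: subst_subst act_subst_rot_to_cc)
  also have "\<dots> = act (rot k 1) d"
    by (simp add: act_eq_subst subst_to_cc_from_cc)
  also have "\<dots> = subst to_cc ?d'"
    using act_rot_1_Ddih[OF _ d] k by (simp add: subst_to_cc_from_cc)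
  finally have "subst (diag_scaling (cc_scaling (cis ?t))) ?d' = ?d'"
    by (metis subst_from_cc_to_cc)
  from weight_eq_1_if_diag_scaling_fixed[OF this m]
  have "cis (2 * pi * of_int (monom_cweight m) / real k) = 1"
    by (simp add: prod_cc_scaling_cis)
  then show "int k dvd monom_cweight m"
    using cis_2pi_frac_eq_1_iff[of k] k by simp
  have "const_free (from_cc v)" for v
    by (cases v) (simp_all add: from_cc_def const_free_xform const_free_yform)
  then have "Poly_Mapping.lookup ?d' 0 = 0"
    using const_free_Ddih[OF _ d] k by (simp add: const_free_def lookup_0_subst)
  then show "m \<noteq> 0"
    using m by (auto simp: in_keys_iff)
qed

section \<open>Order of vanishing on two lines\<close>

definition order_ge :: "nat \<Rightarrow> poly4 \<Rightarrow> bool" where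
  "order_ge N q \<longleftrightarrow> (\<forall>m\<in>Poly_Mapping.keys q. N \<le> tdeg m)"

lemma order_ge_0 [simp]: "order_ge N 0"
  by (simp add: order_ge_def)

lemma order_ge_add: "order_ge N p \<Longrightarrow> order_ge N q \<Longrightarrow> order_ge N (p + q)"
  unfolding order_ge_def by (auto dest!: subsetD[OF keys_add])

lemma order_ge_sum: "(\<And>x. x \<in> S \<Longrightarrow> order_ge N (f x)) \<Longrightarrow> order_ge N (sum f S)"
  by (induction S rule: infinite_finite_induct) (auto intro: order_ge_add)

lemma order_ge_mult: "order_ge N p \<Longrightarrow> order_ge N (q * p)"
  unfolding order_ge_def by (auto simp: tdeg_add dest!: subsetD[OF keys_mult])

lemma order_ge_smult: "order_ge N p \<Longrightarrow> order_ge N (pconst c * p)"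
  unfolding order_ge_def by (auto dest!: subsetD[OF keys_pconst_mult])

lemma order_ge_single: "N \<le> tdeg m \<Longrightarrow> order_ge N (Poly_Mapping.single m c)"
  by (simp add: order_ge_def)

lemma order_ge_Suc_const_free_mult:
  assumes "const_free q" "order_ge N p"
  shows "order_ge (Suc N) (q * p)"
  unfolding order_ge_def
proof
  fix m assume "m \<in> Poly_Mapping.keys (q * p)"
  then obtain a b where m: "m = a + b" "a \<in> Poly_Mapping.keys q" "b \<in> Poly_Mapping.keys p"
    using keys_mult by blast
  have "a \<noteq> 0"
    using m(2) assms(1) by (auto simp: const_free_def in_keys_iff)
  then have "0 < tdeg a"
    using tdeg_eq_0_iff by (metis neq0_conv)
  moreover have "N \<le> tdeg b"
    using m(3) assms(2) by (auto simp: order_ge_def)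
  ultimately show "Suc N \<le> tdeg m"
    by (simp add: m(1) tdeg_add)
qed

lemma lookup_eq_0_if_order_ge: "order_ge N q \<Longrightarrow> tdeg m < N \<Longrightarrow> Poly_Mapping.lookup q m = 0"
  unfolding order_ge_def by (meson in_keys_iff not_le)

lemma order_ge_subst_Adih:
  assumes "\<And>d. d \<in> Ddih k \<Longrightarrow> order_ge N (subst \<sigma> d)" and "a \<in> Adih k"
  shows "order_ge N (subst \<sigma> a)"
  using assms(2) unfolding Adih_eq_span
proof (induction rule: pmod.span_induct_alt)
  case (step c x y)
  then show ?case
    by (simp add: subst_add subst_mult order_ge_add order_ge_mult assms(1))
qed simp

lemma order_ge_subst_Mdih:
  assumes \<sigma>: "\<And>v. const_free (\<sigma> v)"
    and D: "\<And>d. d \<in> Ddih k \<Longrightarrow> order_ge N (subst \<sigma> d)" and x: "x \<in> Mdih k"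
  shows "order_ge (Suc N) (subst \<sigma> x)"
  using x unfolding Mdih_eq_span
proof (induction rule: pmod.span_induct_alt)
  case (step c z y)
  from step(1) obtain f a where fa: "z = f * a" "const_free f" "a \<in> Adih k"
    by blast
  have "const_free (subst \<sigma> c * subst \<sigma> f)"
    by (rule const_free_mult_right, rule const_free_subst[OF \<sigma> fa(2)])
  then have "order_ge (Suc N) (subst \<sigma> c * subst \<sigma> f * subst \<sigma> a)"
    using order_ge_subst_Adih[OF D fa(3)] by (rule order_ge_Suc_const_free_mult)
  moreover have "subst \<sigma> (c * z + y) = subst \<sigma> c * subst \<sigma> f * subst \<sigma> a + subst \<sigma> y"
    unfolding fa(1) subst_add subst_mult by (simp only: mult.assoc)
  ultimately show ?case
    using step(2) by (simp only: order_ge_add)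
qed simp

text \<open>Restriction to the line \<open>x\<^sub>2 = i x\<^sub>1, y\<^sub>2 = e y\<^sub>1\<close>. For \<open>e = \<plusminus>i\<close> it kills all but two of the
  complex coordinates, so complex monomials become monomials in \<open>x\<^sub>1, y\<^sub>1\<close>.\<close>

definition line_subst :: "complex \<Rightarrow> var \<Rightarrow> poly4" where
  "line_subst e v = (case v of X1 \<Rightarrow> xform 1 0 | X2 \<Rightarrow> xform \<i> 0 | Y1 \<Rightarrow> yform 1 0 | Y2 \<Rightarrow> yform e 0)"

lemma const_free_line_subst: "const_free (line_subst e v)"
  by (cases v) (simp_all add: line_subst_def const_free_xform const_free_yform)

lemma bihomog_subst_line_subst: "bihomog i j p \<Longrightarrow> bihomog i j (subst (line_subst e) p)"
  by (intro bihomog_subst) (simp_all only: line_subst_def var.case bihomog_xform bihomog_yform)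

lemma line_subst_cc:
  "subst (line_subst \<i>) cz = 0" "subst (line_subst \<i>) czb = pconst 2 * pvar X1"
  "subst (line_subst \<i>) cw = 0" "subst (line_subst \<i>) cwb = pconst 2 * pvar Y1"
  "subst (line_subst (- \<i>)) cz = 0" "subst (line_subst (- \<i>)) czb = pconst 2 * pvar X1"
  "subst (line_subst (- \<i>)) cw = pconst 2 * pvar Y1" "subst (line_subst (- \<i>)) cwb = 0"
proof -
  have "xform 0 0 = 0" "yform 0 0 = 0" "xform 2 0 = pconst 2 * pvar X1" "yform 2 0 = pconst 2 * pvar Y1"
    by (simp_all add: xform_def yform_def)
  then show "subst (line_subst \<i>) cz = 0" "subst (line_subst \<i>) czb = pconst 2 * pvar X1"
    "subst (line_subst \<i>) cw = 0" "subst (line_subst \<i>) cwb = pconst 2 * pvar Y1"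
    "subst (line_subst (- \<i>)) cz = 0" "subst (line_subst (- \<i>)) czb = pconst 2 * pvar X1"
    "subst (line_subst (- \<i>)) cw = pconst 2 * pvar Y1" "subst (line_subst (- \<i>)) cwb = 0"
    unfolding subst_cc
    by (simp_all add: line_subst_def xform_smult yform_smult xform_add yform_add xform_diff yform_diff)
qed

lemma power_pconst_2_pvar:
  "(pconst 2 * pvar X1) ^ b * (pconst 2 * pvar Y1) ^ d =
     pconst (2 ^ (b + d)) * Poly_Mapping.single (exps b 0 d 0) 1"
proof -
  have "(pconst 2 * pvar X1) ^ b * (pconst 2 * pvar Y1) ^ d =
      (pconst 2 ^ b * pconst 2 ^ d) * (pvar X1 ^ b * pvar Y1 ^ d)"
    by (simp only: power_mult_distrib mult_ac)
  moreover have "pconst 2 ^ b * pconst 2 ^ d = pconst (2 ^ (b + d))"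
    by (simp only: pconst_power power_add pconst_mult[symmetric])
  moreover have "pvar X1 ^ b * pvar Y1 ^ d = Poly_Mapping.single (exps b 0 d 0) 1"
    by (simp add: pvar_power mult_single exps_def)
  ultimately show ?thesis
    by simp
qed

lemma line_subst_i_cmon:
  "subst (line_subst \<i>) (cmon a b c d) =
     (if a = 0 \<and> c = 0 then pconst (2 ^ (b + d)) * Poly_Mapping.single (exps b 0 d 0) 1 else 0)"
proof -
  have "subst (line_subst \<i>) (cmon a b c d) =
      0 ^ a * 0 ^ c * ((pconst 2 * pvar X1) ^ b * (pconst 2 * pvar Y1) ^ d)"
    unfolding cmon_def subst_mult subst_power line_subst_cc by (simp only: mult_ac)
  then show ?thesis
    unfolding power_pconst_2_pvar by (cases a; cases c) simp_all
qed

lemma line_subst_minus_i_cmon: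
  "subst (line_subst (- \<i>)) (cmon a b c d) =
     (if a = 0 \<and> d = 0 then pconst (2 ^ (b + c)) * Poly_Mapping.single (exps b 0 c 0) 1 else 0)"
proof -
  have "subst (line_subst (- \<i>)) (cmon a b c d) =
      0 ^ a * 0 ^ d * ((pconst 2 * pvar X1) ^ b * (pconst 2 * pvar Y1) ^ c)"
    unfolding cmon_def subst_mult subst_power line_subst_cc by (simp only: mult_ac)
  then show ?thesis
    unfolding power_pconst_2_pvar by (cases a; cases d) simp_all
qed

lemma degree_bounds_if_cweight_dvd:
  assumes k: "2 \<le> k" and dvd: "int k dvd cweight a b c d" and nz: "(a, b, c, d) \<noteq> (0, 0, 0, 0)"
  shows "a = 0 \<Longrightarrow> c = 0 \<Longrightarrow> k \<le> b + d" and "a = 0 \<Longrightarrow> d = 0 \<Longrightarrow> 2 \<le> b + c"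
proof -
  assume "a = 0" "c = 0"
  then have "int k dvd - (- int b - int d)"
    using dvd by (simp only: dvd_minus_iff) (simp add: cweight_def)
  then have "k dvd b + d"
    by (simp add: add.commute flip: int_dvd_int_iff)
  then show "k \<le> b + d"
    using nz \<open>a = 0\<close> \<open>c = 0\<close> by (auto intro: dvd_imp_le)
next
  assume "a = 0" "d = 0"
  show "2 \<le> b + c"
  proof (rule ccontr)
    assume "\<not> 2 \<le> b + c"
    then have "b = 1 \<and> c = 0 \<or> b = 0 \<and> c = 1"
      using nz \<open>a = 0\<close> \<open>d = 0\<close> by auto
    then have "int k dvd 1"
      using dvd \<open>a = 0\<close> \<open>d = 0\<close> by (elim disjE) (simp_all add: cweight_def)
    then show False
      using k by simp
  qed
qed

lemma order_ge_line_subst_Ddih: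
  assumes k: "2 \<le> k" and d: "d \<in> Ddih k"
  shows "order_ge k (subst (line_subst \<i>) d)" and "order_ge 2 (subst (line_subst (- \<i>)) d)"
proof -
  have terms: "order_ge k (subst (line_subst \<i>) (eval_monom to_cc m)) \<and>
      order_ge 2 (subst (line_subst (- \<i>)) (eval_monom to_cc m))"
    if m: "m \<in> Poly_Mapping.keys (subst from_cc d)" for m
  proof -
    obtain a b c e where abce: "m = exps a b c e"
      using exps_lookup by blast
    have dvd: "int k dvd cweight a b c e"
      using cc_keys_Ddih(1)[OF k d m] by (simp add: abce monom_cweight_def)
    have "(a, b, c, e) \<noteq> (0, 0, 0, 0)"
    proof
      assume "(a, b, c, e) = (0, 0, 0, 0)"
      then show False
        using cc_keys_Ddih(2)[OF k d m] abce exps_0 by simp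
    qed
    with degree_bounds_if_cweight_dvd[OF k dvd] show ?thesis
      by (auto simp: abce eval_monom_to_cc line_subst_i_cmon line_subst_minus_i_cmon
          tdeg_def xdeg_def ydeg_def intro!: order_ge_smult order_ge_single)
  qed
  show "order_ge k (subst (line_subst \<i>) d)" and "order_ge 2 (subst (line_subst (- \<i>)) d)"
    by (subst cc_expansion, unfold subst_sum subst_mult subst_pconst,
        use terms in \<open>blast intro: order_ge_sum order_ge_smult\<close>)+
qed

section \<open>Generators of \<open>A\<close> modulo \<open>\<langle>x,y\<rangle>A\<close>\<close>

text \<open>Writing \<open>'\<close> for the swap \<open>z \<leftrightarrow> z'\<close>, \<open>w \<leftrightarrow> w'\<close>:
  \<open>Q E - Q' E' = Q (E - E') + E' (Q - Q')\<close>, and both antisymmetrised factors are determinantal.\<close>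

lemma acmon_add_in_Mdih:
  assumes k: "0 < k" and dvd1: "int k dvd cweight a1 b1 c1 d1" and dvd2: "int k dvd cweight a2 b2 c2 d2"
    and pos1: "0 < a1 + b1 + c1 + d1" and pos2: "0 < a2 + b2 + c2 + d2"
  shows "acmon (a1 + a2) (b1 + b2) (c1 + c2) (d1 + d2) \<in> Mdih k"
proof -
  have "acmon (a1 + a2) (b1 + b2) (c1 + c2) (d1 + d2) =
      cmon a1 b1 c1 d1 * acmon a2 b2 c2 d2 + cmon b2 a2 d2 c2 * acmon a1 b1 c1 d1"
    unfolding acmon_def cmon_add by (simp add: right_diff_distrib mult.commute)
  moreover have "cmon a1 b1 c1 d1 * acmon a2 b2 c2 d2 \<in> Mdih k"
    using pos1 determinantal_acmon[OF k dvd2]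
    by (intro const_free_mult_in_Mdih const_free_cmon Ddih_subset_Adih) simp_all
  moreover have "cmon b2 a2 d2 c2 * acmon a1 b1 c1 d1 \<in> Mdih k"
    using pos2 determinantal_acmon[OF k dvd1]
    by (intro const_free_mult_in_Mdih const_free_cmon Ddih_subset_Adih) auto
  ultimately show ?thesis
    by (simp add: Mdih_add)
qed

lemma acmon_in_Mdih_if_factor:
  assumes k: "0 < k" and le: "a1 \<le> a" "b1 \<le> b" "c1 \<le> c" "d1 \<le> d"
    and dvd1: "int k dvd cweight a1 b1 c1 d1" and dvd: "int k dvd cweight a b c d"
    and pos: "0 < a1 + b1 + c1 + d1" "a1 + b1 + c1 + d1 < a + b + c + d"
  shows "acmon a b c d \<in> Mdih k"
proof -
  have "cweight (a - a1) (b - b1) (c - c1) (d - d1) = cweight a b c d - cweight a1 b1 c1 d1"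
    using le by (simp add: cweight_def of_nat_diff)
  then have "int k dvd cweight (a - a1) (b - b1) (c - c1) (d - d1)"
    using dvd dvd1 by simp
  from acmon_add_in_Mdih[OF k dvd1 this pos(1)] pos(2) le show ?thesis
    by simp
qed

definition Delta :: poly4 where
  "Delta = acmon 1 0 0 1"

definition theta :: "nat \<Rightarrow> nat \<Rightarrow> poly4" where
  "theta k a = acmon a 0 (k - a) 0"

definition Mgen :: "nat \<Rightarrow> poly4 set" where
  "Mgen k = {x + pconst e * Delta + (\<Sum>a\<le>k. pconst (c a) * theta k a) | x e c. x \<in> Mdih k}"

lemma MgenI:
  "x \<in> Mdih k \<Longrightarrow> p = x + pconst e * Delta + (\<Sum>a\<le>k. pconst (c a) * theta k a) \<Longrightarrow> p \<in> Mgen k"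
  unfolding Mgen_def by auto

lemma MgenE:
  assumes "p \<in> Mgen k"
  obtains x e c where "x \<in> Mdih k" "p = x + pconst e * Delta + (\<Sum>a\<le>k. pconst (c a) * theta k a)"
  using assms unfolding Mgen_def by auto

lemma Mgen_add:
  assumes "p \<in> Mgen k" "q \<in> Mgen k"
  shows "p + q \<in> Mgen k"
proof -
  obtain x1 e1 c1 where 1: "x1 \<in> Mdih k" "p = x1 + pconst e1 * Delta + (\<Sum>a\<le>k. pconst (c1 a) * theta k a)"
    using assms(1) by (rule MgenE)
  obtain x2 e2 c2 where 2: "x2 \<in> Mdih k" "q = x2 + pconst e2 * Delta + (\<Sum>a\<le>k. pconst (c2 a) * theta k a)"
    using assms(2) by (rule MgenE)
  have "p + q = (x1 + x2) + pconst (e1 + e2) * Delta + (\<Sum>a\<le>k. pconst (c1 a + c2 a) * theta k a)"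
    unfolding 1(2) 2(2) pconst_add distrib_right sum.distrib by (simp only: add_ac)
  then show ?thesis
    using Mdih_add[OF 1(1) 2(1)] by (rule MgenI[rotated])
qed

lemma Mgen_smult:
  assumes "p \<in> Mgen k"
  shows "pconst s * p \<in> Mgen k"
proof -
  obtain x e c where 1: "x \<in> Mdih k" "p = x + pconst e * Delta + (\<Sum>a\<le>k. pconst (c a) * theta k a)"
    using assms by (rule MgenE)
  have "pconst s * p = pconst s * x + pconst (s * e) * Delta + (\<Sum>a\<le>k. pconst (s * c a) * theta k a)"
    unfolding 1(2) by (simp only: pconst_mult[symmetric] distrib_left sum_distrib_left mult.assoc)
  then show ?thesis
    using Mdih_mult[OF 1(1)] by (rule MgenI[rotated])
qed

lemma Mdih_subset_Mgen: "x \<in> Mdih k \<Longrightarrow> x \<in> Mgen k"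
  by (rule MgenI[where e = 0 and c = "\<lambda>_. 0"]) simp_all

lemma Mgen_0: "0 \<in> Mgen k"
  by (rule Mdih_subset_Mgen[OF Mdih_0])

lemma Mgen_sum: "(\<And>x. x \<in> S \<Longrightarrow> f x \<in> Mgen k) \<Longrightarrow> sum f S \<in> Mgen k"
  by (induction S rule: infinite_finite_induct) (auto intro: Mgen_add Mgen_0)

lemma Mgen_uminus: "p \<in> Mgen k \<Longrightarrow> - p \<in> Mgen k"
  using Mgen_smult[of p k "-1"] by (simp add: pconst_minus)

lemma Delta_in_Mgen: "Delta \<in> Mgen k"
  by (rule MgenI[OF Mdih_0, where e = 1 and c = "\<lambda>_. 0"]) simp

lemma theta_in_Mgen:
  assumes "a \<le> k"
  shows "theta k a \<in> Mgen k"
proof (rule MgenI[OF Mdih_0, where e = 0 and c = "\<lambda>b. if b = a then 1 else 0"])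
  have "(\<Sum>b\<le>k. pconst (if b = a then 1 else 0) * theta k b) = (\<Sum>b\<le>k. if b = a then theta k b else 0)"
    by (rule sum.cong) auto
  then show "theta k a = 0 + pconst 0 * Delta + (\<Sum>b\<le>k. pconst (if b = a then 1 else 0) * theta k b)"
    using assms by simp
qed

lemma acmon_holomorphic_in_Mgen:
  assumes k: "2 \<le> k" and dvd: "int k dvd int (a + c)"
  shows "acmon a 0 c 0 \<in> Mgen k"
proof -
  have "a + c = 0 \<or> k \<le> a + c"
    using dvd k by (metis dvd_imp_le int_dvd_int_iff neq0_conv)
  moreover have "acmon a 0 c 0 \<in> Mgen k" if "a + c = k"
  proof -
    have "acmon a 0 c 0 = theta k a"
      using that by (auto simp: theta_def)
    then show ?thesis
      using theta_in_Mgen[of a k] that by simp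
  qed
  moreover have "acmon a 0 c 0 \<in> Mgen k" if "k < a + c"
    using that k dvd
    by (intro Mdih_subset_Mgen acmon_in_Mdih_if_factor[of k "min a k" a 0 0 "k - min a k" c 0 0])
       (auto simp: cweight_def)
  ultimately show ?thesis
    by (auto simp: acmon_def Mgen_0 order.order_iff_strict)
qed

lemma acmon_in_Mgen_if_degree_2_factor:
  assumes k: "0 < k" and le: "a1 \<le> a" "b1 \<le> b" "c1 \<le> c" "d1 \<le> d"
    and weight: "cweight a1 b1 c1 d1 = 0" and deg: "a1 + b1 + c1 + d1 = 2"
    and dvd: "int k dvd cweight a b c d" and factor: "acmon a1 b1 c1 d1 \<in> Mgen k"
  shows "acmon a b c d \<in> Mgen k"
proof (cases "a + b + c + d = 2")
  case True
  then have "(a, b, c, d) = (a1, b1, c1, d1)"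
    using le deg by auto
  with factor show ?thesis
    by simp
next
  case False
  then show ?thesis
    using le deg weight
    by (intro Mdih_subset_Mgen acmon_in_Mdih_if_factor[OF k _ _ _ _ _ dvd]) auto
qed

lemma acmon_in_Mgen:
  assumes k: "2 \<le> k" and dvd: "int k dvd cweight a b c d"
  shows "acmon a b c d \<in> Mgen k"
proof -
  have k0: "0 < k"
    using k by simp
  have factors: "acmon 1 0 0 1 \<in> Mgen k" "acmon 0 1 1 0 \<in> Mgen k"
    "acmon 1 1 0 0 \<in> Mgen k" "acmon 0 0 1 1 \<in> Mgen k"
    using Delta_in_Mgen Mgen_uminus[OF Delta_in_Mgen] Mgen_0
    by (simp_all add: Delta_def acmon_def)
  consider (ad) "0 < a" "0 < d" | (bc) "0 < b" "0 < c" | (ab) "0 < a" "0 < b" | (cd) "0 < c" "0 < d"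
    | (holomorphic) "b = 0" "d = 0" | (antiholomorphic) "a = 0" "c = 0"
    by linarith
  then show ?thesis
  proof cases
    case holomorphic
    then show ?thesis
      using acmon_holomorphic_in_Mgen[OF k, of a c] dvd by (simp add: cweight_def)
  next
    case antiholomorphic
    then have "cweight a b c d = - int (b + d)"
      by (simp add: cweight_def)
    with dvd have "int k dvd int (b + d)"
      by (simp only: dvd_minus_iff)
    then have "acmon b 0 d 0 \<in> Mgen k"
      by (rule acmon_holomorphic_in_Mgen[OF k])
    then show ?thesis
      using antiholomorphic Mgen_uminus acmon_swap[of b 0 d 0] by fastforce
  next
    case ad
    then show ?thesis
      by (intro acmon_in_Mgen_if_degree_2_factor[OF k0 _ _ _ _ _ _ dvd factors(1)]) (simp_all add: cweight_def)
  next
    case bc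
    then show ?thesis
      by (intro acmon_in_Mgen_if_degree_2_factor[OF k0 _ _ _ _ _ _ dvd factors(2)]) (simp_all add: cweight_def)
  next
    case ab
    then show ?thesis
      by (intro acmon_in_Mgen_if_degree_2_factor[OF k0 _ _ _ _ _ _ dvd factors(3)]) (simp_all add: cweight_def)
  next
    case cd
    then show ?thesis
      by (intro acmon_in_Mgen_if_degree_2_factor[OF k0 _ _ _ _ _ _ dvd factors(4)]) (simp_all add: cweight_def)
  qed
qed

text \<open>The reflection \<open>refl k 0\<close> swaps \<open>z \<leftrightarrow> z'\<close>, \<open>w \<leftrightarrow> w'\<close> and negates a determinantal
  polynomial \<open>d\<close>, so \<open>2 d = d - refl k 0 \<cdot> d\<close> is a combination of antisymmetrised monomials.\<close>

lemma Ddih_subset_Mgen: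
  assumes k: "2 \<le> k" and d: "d \<in> Ddih k"
  shows "d \<in> Mgen k"
proof -
  let ?d' = "subst from_cc d"
  let ?cm = "\<lambda>m. cmon (Poly_Mapping.lookup m X1) (Poly_Mapping.lookup m X2)
                       (Poly_Mapping.lookup m Y1) (Poly_Mapping.lookup m Y2)"
  let ?am = "\<lambda>m. acmon (Poly_Mapping.lookup m X1) (Poly_Mapping.lookup m X2)
                       (Poly_Mapping.lookup m Y1) (Poly_Mapping.lookup m Y2)"
  have expansion: "d = (\<Sum>m\<in>Poly_Mapping.keys ?d'. pconst (Poly_Mapping.lookup ?d' m) * ?cm m)"
    using cc_expansion[of d] by (simp add: eval_monom_to_cc)
  let ?Sa = "\<Sum>m\<in>Poly_Mapping.keys ?d'. pconst (Poly_Mapping.lookup ?d' m) * ?am m"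
  have "- d = act (refl k 0) d"
    using act_refl_0_Ddih[OF _ d] k by simp
  also have "\<dots> = (\<Sum>m\<in>Poly_Mapping.keys ?d'. pconst (Poly_Mapping.lookup ?d' m) * (?cm m - ?am m))"
    by (subst expansion) (simp add: act_eq_subst subst_sum subst_mult act_refl_cmon[unfolded act_eq_subst] acmon_def)
  also have "\<dots> = d - ?Sa"
    by (subst (2) expansion) (simp only: right_diff_distrib sum_subtractf)
  finally have "?Sa = d + d"
    by (simp add: algebra_simps)
  moreover have "pconst 2 * d = d + d"
    by (metis one_add_one pconst_1 pconst_add distrib_right mult_1)
  ultimately have sum_eq: "pconst 2 * d = ?Sa"
    by simp
  have "pconst 2 * d \<in> Mgen k"
    unfolding sum_eq
    using cc_keys_Ddih(1)[OF k d] by (intro Mgen_sum Mgen_smult acmon_in_Mgen[OF k]) (simp add: monom_cweight_def)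
  then have "pconst (1 / 2) * (pconst 2 * d) \<in> Mgen k"
    by (rule Mgen_smult)
  then show ?thesis
    by (simp add: mult.assoc[symmetric] pconst_mult)
qed

lemma Adih_subset_Mgen:
  assumes k: "2 \<le> k" and a: "a \<in> Adih k"
  shows "a \<in> Mgen k"
  using a unfolding Adih_eq_span
proof (induction rule: pmod.span_induct_alt)
  case (step c x y)
  let ?c0 = "pconst (Poly_Mapping.lookup c 0)"
  have "const_free (c - ?c0)"
    by (simp add: const_free_def lookup_minus lookup_pconst)
  then have "(c - ?c0) * x \<in> Mgen k"
    using step(1) by (intro Mdih_subset_Mgen const_free_mult_in_Mdih Ddih_subset_Adih) simp
  moreover have "?c0 * x \<in> Mgen k"
    using step(1) by (intro Mgen_smult Ddih_subset_Mgen[OF k]) simp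
  moreover have "c * x + y = ?c0 * x + ((c - ?c0) * x + y)"
    by (simp add: left_diff_distrib)
  ultimately show ?case
    using step(2) by (simp add: Mgen_add)
qed (rule Mgen_0)

section \<open>Coefficient functionals and the dimension count\<close>

definition line_coeff :: "complex \<Rightarrow> (var \<Rightarrow>\<^sub>0 nat) \<Rightarrow> poly4 \<Rightarrow> complex" where
  "line_coeff e m p = Poly_Mapping.lookup (subst (line_subst e) p) m"

lemma line_coeff_add: "line_coeff e m (p + q) = line_coeff e m p + line_coeff e m q"
  by (simp add: line_coeff_def subst_add lookup_add)

lemma line_coeff_smult: "line_coeff e m (pconst c * p) = c * line_coeff e m p"
  by (simp add: line_coeff_def subst_mult lookup_pconst_mult)

lemma line_coeff_sum: "line_coeff e m (sum f S) = (\<Sum>x\<in>S. line_coeff e m (f x))"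
  by (simp add: line_coeff_def subst_sum lookup_sum)

lemma line_coeff_eq_0_if_bihomog:
  "bihomog i j p \<Longrightarrow> (xdeg m, ydeg m) \<noteq> (i, j) \<Longrightarrow> line_coeff e m p = 0"
  unfolding line_coeff_def by (rule lookup_eq_0_if_bihomog[OF bihomog_subst_line_subst])

lemma line_coeff_Mdih:
  assumes k: "2 \<le> k" and x: "x \<in> Mdih k"
  shows "tdeg m \<le> k \<Longrightarrow> line_coeff \<i> m x = 0" and "tdeg m \<le> 2 \<Longrightarrow> line_coeff (- \<i>) m x = 0"
  unfolding line_coeff_def
  using order_ge_subst_Mdih[OF const_free_line_subst order_ge_line_subst_Ddih(1)[OF k] x]
    order_ge_subst_Mdih[OF const_free_line_subst order_ge_line_subst_Ddih(2)[OF k] x]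
  by (auto elim!: lookup_eq_0_if_order_ge)

lemma line_coeff_i_Delta: "line_coeff \<i> m Delta = 0"
  by (simp add: line_coeff_def Delta_def acmon_def subst_diff line_subst_i_cmon)

lemma line_coeff_minus_i_Delta: "line_coeff (- \<i>) (exps 1 0 1 0) Delta = -4"
  by (simp add: line_coeff_def Delta_def acmon_def subst_diff line_subst_minus_i_cmon lookup_minus
      lookup_pconst_mult)

lemma line_coeff_i_theta:
  assumes "0 < k" "a \<le> k" "b \<le> k"
  shows "line_coeff \<i> (exps b 0 (k - b) 0) (theta k a) = (if a = b then - (2 ^ k) else 0)"
  using assms
  by (auto simp: line_coeff_def theta_def acmon_def subst_diff line_subst_i_cmon lookup_minus
      lookup_pconst_mult lookup_single)

lemma line_coeff_minus_i_theta: "line_coeff (- \<i>) (exps 1 0 1 0) (theta k a) = 0"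
  by (auto simp: line_coeff_def theta_def acmon_def subst_diff line_subst_minus_i_cmon lookup_minus
      lookup_pconst_mult lookup_single)

lemma bihomog_theta: "a \<le> k \<Longrightarrow> bihomog a (k - a) (theta k a)"
  using bihomog_acmon[of a 0 "k - a" 0] by (simp add: theta_def)

lemma bihomog_Delta: "bihomog 1 1 Delta"
  using bihomog_acmon[of 1 0 0 1] by (simp add: Delta_def)

lemma tdeg_exps: "tdeg (exps a b c d) = a + b + c + d"
  by (simp add: tdeg_def xdeg_def ydeg_def)

text \<open>The coefficient functionals vanish on \<open>\<langle>x,y\<rangle>A\<close> and outside their bidegree, but not on the
  corresponding generator.\<close>

lemma Mgen_coeffs_eq_0_if_bihomog:
  assumes k: "2 \<le> k" and x: "x \<in> Mdih k"
    and p: "bihomog i j (x + pconst e * Delta + (\<Sum>a\<le>k. pconst (c a) * theta k a))"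
  shows "b \<le> k \<Longrightarrow> (b, k - b) \<noteq> (i, j) \<Longrightarrow> c b = 0" and "\<not> (i = 1 \<and> j = 1) \<Longrightarrow> e = 0"
proof -
  let ?p = "x + pconst e * Delta + (\<Sum>a\<le>k. pconst (c a) * theta k a)"
  assume b: "b \<le> k" "(b, k - b) \<noteq> (i, j)"
  have "line_coeff \<i> (exps b 0 (k - b) 0) ?p =
      (\<Sum>a\<le>k. c a * line_coeff \<i> (exps b 0 (k - b) 0) (theta k a))"
    using line_coeff_Mdih(1)[OF k x, of "exps b 0 (k - b) 0"] b(1)
    by (simp add: line_coeff_add line_coeff_smult line_coeff_sum line_coeff_i_Delta tdeg_exps)
  also have "\<dots> = - c b * 2 ^ k"
    using b(1) k by (simp add: line_coeff_i_theta if_distrib cong: if_cong)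
  finally show "c b = 0"
    using line_coeff_eq_0_if_bihomog[OF p] b by (simp add: xdeg_def ydeg_def)
next
  let ?p = "x + pconst e * Delta + (\<Sum>a\<le>k. pconst (c a) * theta k a)"
  assume ij: "\<not> (i = 1 \<and> j = 1)"
  have "line_coeff (- \<i>) (exps 1 0 1 0) ?p = - 4 * e"
    unfolding line_coeff_add line_coeff_smult line_coeff_sum line_coeff_minus_i_Delta
      line_coeff_minus_i_theta
    using line_coeff_Mdih(2)[OF k x, of "exps 1 0 1 0"] by (simp add: tdeg_exps)
  moreover have "line_coeff (- \<i>) (exps 1 0 1 0) ?p = 0"
    by (rule line_coeff_eq_0_if_bihomog[OF p]) (use ij in \<open>auto simp: xdeg_def ydeg_def\<close>)
  ultimately show "e = 0"
    by simp
qed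

lemma bihom_Adih_decomp:
  assumes k: "2 \<le> k" and p: "p \<in> Adih k" "bihomog i j p"
  obtains x e c where "x \<in> Mdih k" "bihomog i j x" "p = x + pconst e * Delta + pconst c * theta k i"
    "\<not> (i = 1 \<and> j = 1) \<Longrightarrow> e = 0" "i + j \<noteq> k \<Longrightarrow> c = 0"
proof -
  from Adih_subset_Mgen[OF k p(1)] obtain x e c where x: "x \<in> Mdih k"
    and p_eq: "p = x + pconst e * Delta + (\<Sum>a\<le>k. pconst (c a) * theta k a)"
    by (rule MgenE)
  note coeffs = Mgen_coeffs_eq_0_if_bihomog[OF k x p(2)[unfolded p_eq]]
  define c' where "c' = (if i + j = k then c i else 0)"
  have "(\<Sum>a\<le>k. pconst (c a) * theta k a) = (\<Sum>a\<le>k. if a = i \<and> i + j = k then pconst c' * theta k i else 0)"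
    by (intro sum.cong) (auto simp: c'_def intro!: coeffs(1))
  also have "\<dots> = pconst c' * theta k i"
    by (simp add: sum.delta c'_def)
  finally have p_eq': "p = x + pconst e * Delta + pconst c' * theta k i"
    using p_eq by simp
  moreover have "bihomog i j x"
  proof -
    have "bihomog i j (pconst e * Delta)"
      using bihomog_Delta coeffs(2) by (cases "i = 1 \<and> j = 1") (auto simp: bihomog_smult)
    moreover have "bihomog i j (pconst c' * theta k i)"
      using bihomog_theta[of i k] by (auto simp: c'_def intro: bihomog_smult)
    ultimately show ?thesis
      using bihomog_diff[OF bihomog_diff[OF p(2)]] p_eq' by (metis add_diff_cancel_right')
  qed
  ultimately show ?thesis
    using that x coeffs(2) by (auto simp: c'_def)
qed

lemma notin_span_if_functional:
  assumes add: "\<And>p q. L (p + q) = L p + L q" and smult: "\<And>c p. L (pconst c * p) = c * L p"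
    and S: "\<And>y. y \<in> S \<Longrightarrow> L y = 0" and x: "L x \<noteq> 0"
  shows "x \<notin> cvec.span S"
proof
  assume "x \<in> cvec.span S"
  then have "L x = 0"
  proof (induction rule: cvec.span_induct_alt)
    case base
    show ?case
      using smult[of 0 0] by simp
  qed (simp add: add smult S)
  with x show False
    by simp
qed

lemma dim_insert_notin_span:
  assumes W: "finite W" "S \<subseteq> cvec.span W" and x: "x \<notin> cvec.span S"
  shows "cvec.dim (insert x S) = Suc (cvec.dim S)"
proof -
  obtain B where B: "B \<subseteq> S" "cvec.independent B" "S \<subseteq> cvec.span B" "card B = cvec.dim S"
    using cvec.basis_exists[of S] by blast
  have span_B: "cvec.span B = cvec.span S"
    using B(1,3) by (metis cvec.span_mono cvec.span_span subset_antisym)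
  have "finite B"
    using cvec.independent_span_bound[OF W(1) B(2)] B(1) W(2) by auto
  moreover have "x \<notin> B"
    using x span_B cvec.span_base by blast
  moreover have "cvec.span (insert x B) = cvec.span (insert x S)"
    using span_B by (simp add: cvec.span_insert)
  then have "cvec.dim (insert x S) = card (insert x B)"
    by (rule cvec.dim_eq_card) (rule cvec.independent_insertI[OF _ B(2)], simp add: span_B x)
  ultimately show ?thesis
    using B(4) by simp
qed

definition monoms :: "nat \<Rightarrow> nat \<Rightarrow> poly4 set" where
  "monoms i j = (\<lambda>(a, b, c, d). Poly_Mapping.single (exps a b c d) 1) ` ({..i} \<times> {..i} \<times> {..j} \<times> {..j})"

lemma finite_monoms: "finite (monoms i j)"
  by (simp add: monoms_def)

lemma bihomog_in_span_monoms:
  assumes "bihomog i j p"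
  shows "p \<in> cvec.span (monoms i j)"
proof -
  have "p = (\<Sum>m\<in>Poly_Mapping.keys p. pconst (Poly_Mapping.lookup p m) * Poly_Mapping.single m 1)"
    by (subst poly_mapping_sum_single) (simp add: pconst_mult_single)
  also have "\<dots> \<in> cvec.span (monoms i j)"
  proof (intro cvec.span_sum cvec.span_scale cvec.span_base)
    fix m assume "m \<in> Poly_Mapping.keys p"
    then have "xdeg m = i" "ydeg m = j"
      using assms by (auto simp: bihomog_def)
    then show "Poly_Mapping.single m 1 \<in> monoms i j"
      unfolding monoms_def
      by (subst exps_lookup, intro image_eqI[where x = "(Poly_Mapping.lookup m X1, Poly_Mapping.lookup m X2,
          Poly_Mapping.lookup m Y1, Poly_Mapping.lookup m Y2)"]) (auto simp: xdeg_def ydeg_def)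
  qed
  finally show ?thesis .
qed

lemma theta_in_Adih: "0 < k \<Longrightarrow> a \<le> k \<Longrightarrow> theta k a \<in> Adih k"
  using determinantal_acmon[of k a 0 "k - a" 0] by (simp add: theta_def cweight_def Ddih_subset_Adih)

lemma Delta_in_Adih: "0 < k \<Longrightarrow> Delta \<in> Adih k"
  using determinantal_acmon[of k 1 0 0 1] by (simp add: Delta_def cweight_def Ddih_subset_Adih)

definition Agens :: "nat \<Rightarrow> nat \<Rightarrow> nat \<Rightarrow> poly4 set" where
  "Agens k i j = (if i = 1 \<and> j = 1 then {Delta} else {}) \<union> (if i + j = k then {theta k i} else {}) \<union>
     bihom (Mdih k) i j"

lemma span_bihom_Adih:
  assumes k: "2 \<le> k"
  shows "cvec.span (bihom (Adih k) i j) = cvec.span (Agens k i j)"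
proof -
  have "Agens k i j \<subseteq> bihom (Adih k) i j"
    using k bihomog_theta[of i k] bihomog_Delta
    by (auto simp: Agens_def bihom_eq theta_in_Adih Delta_in_Adih intro: Mdih_subset_Adih)
  moreover have "bihom (Adih k) i j \<subseteq> cvec.span (Agens k i j)"
  proof
    fix p assume "p \<in> bihom (Adih k) i j"
    then have p: "p \<in> Adih k" "bihomog i j p"
      by (simp_all add: bihom_eq)
    obtain x e c where x: "x \<in> Mdih k" "bihomog i j x"
      and p_eq: "p = x + pconst e * Delta + pconst c * theta k i"
      and e: "\<not> (i = 1 \<and> j = 1) \<Longrightarrow> e = 0" and c: "i + j \<noteq> k \<Longrightarrow> c = 0"
      using bihom_Adih_decomp[OF k p] by blast
    have "x \<in> cvec.span (Agens k i j)"
      using x by (intro cvec.span_base) (simp add: Agens_def bihom_eq)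
    moreover have "pconst e * Delta \<in> cvec.span (Agens k i j)"
      using e by (cases "i = 1 \<and> j = 1") (simp_all add: Agens_def cvec.span_zero cvec.span_scale cvec.span_base)
    moreover have "pconst c * theta k i \<in> cvec.span (Agens k i j)"
      using c by (cases "i + j = k") (simp_all add: Agens_def cvec.span_zero cvec.span_scale cvec.span_base)
    ultimately show "p \<in> cvec.span (Agens k i j)"
      unfolding p_eq by (intro cvec.span_add)
  qed
  ultimately show ?thesis
    by (auto simp: cvec.span_eq intro: cvec.span_base)
qed

lemma dim_Agens:
  assumes k: "2 \<le> k"
  shows "cvec.dim (Agens k i j) =
    cvec.dim (bihom (Mdih k) i j) + (if i + j = k then 1 else 0) + (if i = 1 \<and> j = 1 then 1 else 0)"
proof -
  define Mij where "Mij = bihom (Mdih k) i j"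
  define T where "T = (if i + j = k then insert (theta k i) Mij else Mij)"
  have Mij: "x \<in> Mdih k" "bihomog i j x" if "x \<in> Mij" for x
    using that by (simp_all add: Mij_def bihom_eq)
  have T_span: "T \<subseteq> cvec.span (monoms i j)"
    using Mij bihomog_theta[of i k] bihomog_in_span_monoms by (auto simp: T_def)
  have "cvec.dim T = cvec.dim Mij + (if i + j = k then 1 else 0)"
  proof (cases "i + j = k")
    case True
    have "theta k i \<notin> cvec.span Mij"
      using True k Mij line_coeff_Mdih(1)[OF k, of _ "exps i 0 j 0"] line_coeff_i_theta[of k i i]
      by (intro notin_span_if_functional[where L = "line_coeff \<i> (exps i 0 j 0)"])
         (auto simp: line_coeff_add line_coeff_smult tdeg_exps)
    moreover have "Mij \<subseteq> cvec.span (monoms i j)"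
      using T_span by (auto simp: T_def)
    ultimately show ?thesis
      using True by (simp add: T_def dim_insert_notin_span[OF finite_monoms])
  qed (auto simp: T_def)
  moreover have "cvec.dim (Agens k i j) = cvec.dim T + (if i = 1 \<and> j = 1 then 1 else 0)"
  proof (cases "i = 1 \<and> j = 1")
    case True
    have "Delta \<notin> cvec.span T"
      using True k Mij line_coeff_Mdih(2)[OF k, of _ "exps 1 0 1 0"] line_coeff_minus_i_theta[of k i]
        line_coeff_minus_i_Delta
      by (intro notin_span_if_functional[where L = "line_coeff (- \<i>) (exps 1 0 1 0)"])
         (auto simp: line_coeff_add line_coeff_smult tdeg_exps T_def split: if_splits)
    moreover have "Agens k i j = insert Delta T"
      using True by (auto simp: Agens_def T_def Mij_def)
    ultimately show ?thesis
      using True T_span by (simp add: dim_insert_notin_span[OF finite_monoms])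
  next
    case False
    then have "Agens k i j = T"
      by (auto simp: Agens_def T_def Mij_def)
    then show ?thesis
      using False by simp
  qed
  ultimately show ?thesis
    by (simp add: Mij_def)
qed

theorem corollary3p13:
  fixes k :: nat
  assumes "k \<ge> 2"
  shows "\<forall>i j. catdim 1 k i j =
           (if i + j = k then 1 else 0) + (if i = 1 \<and> j = 1 then 1 else 0)"
proof (intro allI)
  fix i j
  have "ideal_pow (Adih k) 1 = Adih k"
    unfolding Adih_eq_span by (rule ideal_pow_1)
  then show "catdim 1 k i j = (if i + j = k then 1 else 0) + (if i = 1 \<and> j = 1 then 1 else 0)"
    using cvec.span_eq_dim[OF span_bihom_Adih[OF assms]] dim_Agens[OF assms, of i j]
    by (simp add: catdim_def cdim_def)
qed

end
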